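(* Let $t \geq 2$ and $n \geq 1$ be integers, let $x = \left[\frac{nt-1}{t-1}\right]$ and $q = [x/t]$. Then $$R_{t-1,t}(K_{1,n}) = \begin{cases} x & \text{if } x = tq+1 \text{ with } x \text{ and } q \text{ both odd},\\ x+1 & \text{otherwise.}\end{cases}$$
   Context: $[a]$ denotes the integer part (floor) of a real number $a$. $K_{1,n}$ is the star with $n$ edges. For a graph $G$ and integers $1 \leq s < t$, $R_{s,t}(G)$ is the smallest positive integer $N$ such that every coloring of the edges of the complete graph $K_N$ with $t$ colors contains a (not necessarily induced) subgraph isomorphic to $G$ whose edges use at most $s$ distinct colors. *)

theory Defs
  imports Main
begin

definition complete_edges :: "nat \<Rightarrow> nat set set" where
  "complete_edges N = {{u, v} | u v. u < N \<and> v < N \<and> u \<noteq> v}"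

text \<open>A graph G = (V, E) (E a set of 2-element subsets of V) occurs as a (not necessarily
  induced) subgraph of K_N, under the edge colouring c, with its edges using at most s colours.\<close>
definition has_sub_few_colors ::
  "'a set \<Rightarrow> 'a set set \<Rightarrow> nat \<Rightarrow> (nat set \<Rightarrow> nat) \<Rightarrow> nat \<Rightarrow> bool" where
  "has_sub_few_colors V E N c s =
     (\<exists>f. inj_on f V \<and> f ` V \<subseteq> {..<N} \<and> card (c ` ((\<lambda>e. f ` e) ` E)) \<le> s)"

definition ramsey_st :: "nat \<Rightarrow> nat \<Rightarrow> 'a set \<Rightarrow> 'a set set \<Rightarrow> nat" where
  "ramsey_st s t V E = (LEAST N. 0 < N \<and>
     (\<forall>c :: nat set \<Rightarrow> nat. c ` complete_edges N \<subseteq> {..<t} \<longrightarrow> has_sub_few_colors V E N c s))"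

definition star_vertices :: "nat \<Rightarrow> nat set" where
  "star_vertices n = {0..n}"

definition star_edges :: "nat \<Rightarrow> nat set set" where
  "star_edges n = {{0, i} | i. 1 \<le> i \<and> i \<le> n}"

end

theory Submission
  imports Defs "HOL-Number_Theory.Cong"
begin

text \<open>Put k = N - n. A star with n leaves centred at v can avoid colour j as soon as fewer than
  k edges at v have colour j, because the remaining N - 1 - (k - 1) = n neighbours then see at most
  t - 1 colours. Hence a t-colouring of K_N has no (t-1)-coloured K_{1,n} exactly when every colour
  has degree at least k at every vertex. The colour degrees at a vertex sum to N - 1, so this needs
  t k \<le> N - 1. Conversely, such colourings exist (from a 1-factorisation when N is even, from
  circular edge lengths when k is even, by adding a vertex otherwise) except when N = t k + 1 with N
  and k odd: then every colour class would be a k-regular graph with k odd on an odd number of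
  vertices. Solving N \<le> t (N - n) for N gives x + 1, and the exceptional case is N = x.\<close>

section \<open>Stars in edge-coloured complete graphs\<close>

lemma star_vertices_eq: "star_vertices n = insert 0 {1..n}"
  unfolding star_vertices_def by auto

lemma image_star_edges: "(\<lambda>e. f ` e) ` star_edges n = (\<lambda>i. {f 0, f i}) ` {1..n}"
proof -
  have "star_edges n = (\<lambda>i. {0, i}) ` {1..n}"
    unfolding star_edges_def by auto
  then show ?thesis by (simp add: image_image)
qed

lemma complete_edgesI: "u < N \<Longrightarrow> v < N \<Longrightarrow> u \<noteq> v \<Longrightarrow> {u, v} \<in> complete_edges N"
  unfolding complete_edges_def by auto

lemma edge_color_less:
  "c ` complete_edges N \<subseteq> {..<t} \<Longrightarrow> u < N \<Longrightarrow> v < N \<Longrightarrow> u \<noteq> v \<Longrightarrow> c {u, v} < t"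
  using complete_edgesI by blast

lemma has_sub_few_colors_star_iff:
  "has_sub_few_colors (star_vertices n) (star_edges n) N c s \<longleftrightarrow>
     (\<exists>v L. v < N \<and> L \<subseteq> {..<N} - {v} \<and> card L = n \<and> card ((\<lambda>w. c {v, w}) ` L) \<le> s)"
proof
  assume "has_sub_few_colors (star_vertices n) (star_edges n) N c s"
  then obtain f where inj: "inj_on f (insert 0 {1..n})" and img: "f ` insert 0 {1..n} \<subseteq> {..<N}"
    and few: "card (c ` (\<lambda>e. f ` e) ` star_edges n) \<le> s"
    unfolding has_sub_few_colors_def star_vertices_eq by blast
  have "c ` (\<lambda>e. f ` e) ` star_edges n = (\<lambda>w. c {f 0, w}) ` f ` {1..n}"
    by (simp add: image_star_edges image_image)
  moreover have "card (f ` {1..n}) = n"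
    using inj by (simp add: card_image)
  moreover have "f 0 \<notin> f ` {1..n}"
    using inj by simp
  with img have "f ` {1..n} \<subseteq> {..<N} - {f 0}" and "f 0 < N"
    by blast+
  ultimately show "\<exists>v L. v < N \<and> L \<subseteq> {..<N} - {v} \<and> card L = n \<and> card ((\<lambda>w. c {v, w}) ` L) \<le> s"
    using few by metis
next
  assume "\<exists>v L. v < N \<and> L \<subseteq> {..<N} - {v} \<and> card L = n \<and> card ((\<lambda>w. c {v, w}) ` L) \<le> s"
  then obtain v L where v: "v < N" and L: "L \<subseteq> {..<N} - {v}" "card L = n"
    and few: "card ((\<lambda>w. c {v, w}) ` L) \<le> s" by blast
  have "finite L" using L(1) finite_subset by blast
  then obtain g where "bij_betw g {1..n} L"
    using finite_same_card_bij[of "{1..n}" L] L(2) by auto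
  moreover define f where "f = g(0 := v)"
  ultimately have "bij_betw f {1..n} L"
    by (auto intro: bij_betw_cong[THEN iffD1])
  then have f_img: "f ` {1..n} = L" and f_inj: "inj_on f {1..n}"
    by (auto simp: bij_betw_def)
  have f0: "f 0 = v"
    by (simp add: f_def)
  have "v \<notin> L"
    using L(1) by blast
  with f_inj f_img f0 have "inj_on f (star_vertices n)"
    by (simp add: star_vertices_eq)
  moreover have "f ` star_vertices n \<subseteq> {..<N}"
    using f_img f0 L(1) v by (auto simp: star_vertices_eq)
  moreover have "c ` (\<lambda>e. f ` e) ` star_edges n = (\<lambda>w. c {v, w}) ` L"
    by (simp add: image_star_edges image_image f_img[symmetric] f0)
  ultimately show "has_sub_few_colors (star_vertices n) (star_edges n) N c s"
    unfolding has_sub_few_colors_def using few by (intro exI[of _ f]) simp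
qed

definition color_degree :: "nat \<Rightarrow> (nat set \<Rightarrow> nat) \<Rightarrow> nat \<Rightarrow> nat \<Rightarrow> nat" where
  "color_degree N c u j = card {v. v < N \<and> v \<noteq> u \<and> c {u, v} = j}"

lemma sum_color_degree:
  assumes col: "c ` complete_edges N \<subseteq> {..<t}" and u: "u < N"
  shows "(\<Sum>j<t. color_degree N c u j) = N - 1"
proof -
  have "(\<Sum>j<t. color_degree N c u j) = card (\<Union>j<t. {v. v < N \<and> v \<noteq> u \<and> c {u, v} = j})"
    unfolding color_degree_def by (subst card_UN_disjoint) auto
  also have "(\<Union>j<t. {v. v < N \<and> v \<noteq> u \<and> c {u, v} = j}) = {..<N} - {u}"
    using edge_color_less[OF col u] by auto
  finally show ?thesis
    using u by simp
qed

lemma few_colored_star_if_color_degree_le: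
  assumes col: "c ` complete_edges N \<subseteq> {..<t}" and v: "v < N" and j: "j < t"
    and small: "color_degree N c v j + n \<le> N - 1"
  shows "has_sub_few_colors (star_vertices n) (star_edges n) N c (t - 1)"
proof -
  define D where "D = {w. w < N \<and> w \<noteq> v \<and> c {v, w} = j}"
  define S where "S = {..<N} - {v} - D"
  have "D \<subseteq> {..<N} - {v}" and "finite D"
    unfolding D_def by auto
  then have "card S = N - 1 - color_degree N c v j"
    unfolding S_def color_degree_def D_def[symmetric] using v by (simp add: card_Diff_subset)
  with small have "n \<le> card S"
    by linarith
  then obtain L where L: "L \<subseteq> S" "card L = n"
    by (meson obtain_subset_with_card_n)
  have "(\<lambda>w. c {v, w}) ` L \<subseteq> {..<t} - {j}"
    using L(1) edge_color_less[OF col v] unfolding S_def D_def by auto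
  then have "card ((\<lambda>w. c {v, w}) ` L) \<le> t - 1"
    using j card_mono[of "{..<t} - {j}"] by simp
  moreover have "L \<subseteq> {..<N} - {v}"
    using L(1) unfolding S_def by blast
  ultimately show ?thesis
    unfolding has_sub_few_colors_star_iff using L(2) v by blast
qed

lemma no_star_in_small_complete_graph:
  assumes "N \<le> n"
  shows "\<not> has_sub_few_colors (star_vertices n) (star_edges n) N c s"
proof
  assume "has_sub_few_colors (star_vertices n) (star_edges n) N c s"
  then obtain v L where "v < N" "L \<subseteq> {..<N} - {v}" "card L = n"
    unfolding has_sub_few_colors_star_iff by blast
  then have "n \<le> N - 1"
    using card_mono[of "{..<N} - {v}" L] by simp
  with assms \<open>v < N\<close> show False
    by linarith
qed

lemma few_colored_star_if_le_mult:
  assumes col: "c ` complete_edges N \<subseteq> {..<t}" and n: "n < N" and le: "N \<le> t * (N - n)"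
  shows "has_sub_few_colors (star_vertices n) (star_edges n) N c (t - 1)"
proof -
  have "\<exists>j<t. color_degree N c 0 j < N - n"
  proof (rule ccontr)
    assume "\<not> ?thesis"
    then have "(\<Sum>j<t. N - n) \<le> (\<Sum>j<t. color_degree N c 0 j)"
      by (intro sum_mono) auto
    with sum_color_degree[OF col] n le show False
      by simp
  qed
  then obtain j where "j < t" "color_degree N c 0 j < N - n"
    by blast
  with col n show ?thesis
    by (intro few_colored_star_if_color_degree_le[of c N t 0 j]) auto
qed

lemma even_card_if_sym_irrefl:
  fixes P :: "(nat \<times> nat) set"
  assumes "finite P" and sym: "\<And>u v. (u, v) \<in> P \<Longrightarrow> (v, u) \<in> P" and "\<And>u. (u, u) \<notin> P"
  shows "even (card P)"
proof -
  define A where "A = {p \<in> P. fst p < snd p}"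
  have "P = A \<union> prod.swap ` A"
  proof (intro equalityI subsetI)
    fix p assume p: "p \<in> P"
    obtain a b where ab: "p = (a, b)"
      by (cases p)
    with p assms(3) have "a < b \<or> b < a"
      by (metis linorder_neqE)
    with p sym show "p \<in> A \<union> prod.swap ` A"
      unfolding A_def ab by (auto intro: image_eqI[of _ _ "(b, a)"])
  qed (use sym in \<open>auto simp: A_def\<close>)
  moreover have "A \<inter> prod.swap ` A = {}"
    unfolding A_def by auto
  moreover have "finite A"
    unfolding A_def using assms(1) by simp
  ultimately have "card P = card A + card A"
    by (simp add: card_Un_disjoint card_image)
  then show ?thesis
    by simp
qed

lemma even_sum_color_degree: "even (\<Sum>u<N. color_degree N c u j)"
proof -
  define P where "P = Sigma {..<N} (\<lambda>u. {v. v < N \<and> v \<noteq> u \<and> c {u, v} = j})"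
  have "even (card P)"
    by (rule even_card_if_sym_irrefl) (auto simp: P_def insert_commute)
  moreover have "card P = (\<Sum>u<N. color_degree N c u j)"
    unfolding P_def color_degree_def by (simp add: card_SigmaI)
  ultimately show ?thesis
    by simp
qed

text \<open>Otherwise every colour class is k-regular on N vertices, and N k is odd.\<close>

lemma few_colored_star_if_tight_odd:
  assumes col: "c ` complete_edges N \<subseteq> {..<t}" and t: "1 \<le> t"
    and N: "N = t * k + 1" and "odd N" and "odd k" and nk: "n + k = N"
  shows "has_sub_few_colors (star_vertices n) (star_edges n) N c (t - 1)"
proof (rule ccontr)
  assume no_star: "\<not> ?thesis"
  have ge: "k \<le> color_degree N c v j" if "v < N" "j < t" for v j
  proof (rule ccontr)
    assume "\<not> k \<le> color_degree N c v j"
    with nk have "color_degree N c v j + n \<le> N - 1"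
      by linarith
    with few_colored_star_if_color_degree_le[OF col that] no_star show False
      by blast
  qed
  have eq: "color_degree N c v j = k" if v: "v < N" and j: "j < t" for v j
  proof -
    have "(\<Sum>i<t. color_degree N c v i - k) = (\<Sum>i<t. color_degree N c v i) - (\<Sum>i<t. k)"
      using ge[OF v] by (intro sum_subtractf_nat) simp
    also have "\<dots> = 0"
      using sum_color_degree[OF col v] N by simp
    finally have "color_degree N c v j - k = 0"
      using j by simp
    with ge[OF v j] show ?thesis
      by simp
  qed
  have "(\<Sum>u<N. color_degree N c u 0) = N * k"
    using eq t by simp
  with even_sum_color_degree[of N c 0] \<open>odd N\<close> \<open>odd k\<close> show False
    by simp
qed

section \<open>Colourings in which every colour is frequent at every vertex\<close>

definition color_degrees_ge :: "nat \<Rightarrow> nat \<Rightarrow> nat \<Rightarrow> (nat set \<Rightarrow> nat) \<Rightarrow> bool" where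
  "color_degrees_ge N t k c \<longleftrightarrow>
     c ` complete_edges N \<subseteq> {..<t} \<and> (\<forall>u<N. \<forall>j<t. k \<le> color_degree N c u j)"

lemma no_few_colored_star_if_color_degrees_ge:
  assumes rich: "color_degrees_ge N t k c" and N: "N \<le> n + k" and s: "s < t"
  shows "\<not> has_sub_few_colors (star_vertices n) (star_edges n) N c s"
proof
  assume "has_sub_few_colors (star_vertices n) (star_edges n) N c s"
  then obtain v L where v: "v < N" and L: "L \<subseteq> {..<N} - {v}" "card L = n"
    and few: "card ((\<lambda>w. c {v, w}) ` L) \<le> s"
    unfolding has_sub_few_colors_star_iff by blast
  have "{..<t} \<subseteq> (\<lambda>w. c {v, w}) ` L"
  proof
    fix j assume "j \<in> {..<t}"
    define D where "D = {w. w < N \<and> w \<noteq> v \<and> c {v, w} = j}"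
    have "k \<le> card D"
      using rich v \<open>j \<in> {..<t}\<close> unfolding color_degrees_ge_def color_degree_def D_def by blast
    moreover have "card ({..<N} - {v} - L) = N - 1 - n"
      using L v by (simp add: card_Diff_subset finite_subset)
    moreover have "n \<le> N - 1"
      using L v card_mono[of "{..<N} - {v}" L] by simp
    ultimately have "\<not> D \<subseteq> {..<N} - {v} - L"
      using N v card_mono[of "{..<N} - {v} - L" D] by fastforce
    then obtain w where "w \<in> L" "c {v, w} = j"
      unfolding D_def by blast
    then show "j \<in> (\<lambda>w. c {v, w}) ` L"
      by blast
  qed
  then have "t \<le> card ((\<lambda>w. c {v, w}) ` L)"
    using L(1) card_mono[of "(\<lambda>w. c {v, w}) ` L" "{..<t}"] finite_subset by fastforce
  with few s show False
    by simp
qed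

definition block_color :: "nat \<Rightarrow> nat \<Rightarrow> nat \<Rightarrow> nat" where
  "block_color t k s = min (s div k) (t - 1)"

lemma block_color_less: "0 < t \<Longrightarrow> block_color t k s < t"
  unfolding block_color_def by simp

lemma card_block_color_ge:
  assumes j: "j < t" and M: "t * k \<le> M"
  shows "k \<le> card {s. s < M \<and> block_color t k s = j}"
proof -
  have "j * k + k \<le> t * k"
    using j by (metis Suc_leI add.commute mult_Suc mult_le_mono1)
  moreover have "s div k = j" if "s \<in> {j * k..<j * k + k}" for s
    using that by (intro div_nat_eqI) (auto simp: algebra_simps)
  ultimately have "{j * k..<j * k + k} \<subseteq> {s. s < M \<and> block_color t k s = j}"
    using j M by (auto simp: block_color_def)
  from card_mono[OF _ this] show ?thesis
    by simp
qed

lemma color_degree_eq_if_labelling: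
  assumes u: "u < N" and S: "finite S" "card S = N - 1"
    and inj: "inj_on l {v. v < N \<and> v \<noteq> u}" and img: "l ` {v. v < N \<and> v \<noteq> u} \<subseteq> S"
    and c: "\<And>v. v < N \<Longrightarrow> v \<noteq> u \<Longrightarrow> c {u, v} = F (l v)"
  shows "color_degree N c u j = card {s \<in> S. F s = j}"
proof -
  let ?V = "{v. v < N \<and> v \<noteq> u}"
  have "?V = {..<N} - {u}"
    by auto
  with u inj have "card (l ` ?V) = card S"
    using S(2) by (simp add: card_image)
  with img S(1) have "l ` ?V = S"
    by (simp add: card_subset_eq)
  with c have "{s \<in> S. F s = j} = l ` {v. v < N \<and> v \<noteq> u \<and> c {u, v} = j}"
    by auto
  moreover have "inj_on l {v. v < N \<and> v \<noteq> u \<and> c {u, v} = j}"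
    using inj by (rule inj_on_subset) auto
  ultimately show ?thesis
    unfolding color_degree_def by (simp add: card_image)
qed

lemma Min_Max_pair_commute:
  fixes u v :: "'a::linorder"
  assumes "\<And>a b. f a b = f b a"
  shows "f (Min {u, v}) (Max {u, v}) = f u v"
  using assms by (cases "u \<le> v") (simp_all add: min_def max_def)

lemma inj_on_add_mod: "inj_on (\<lambda>v. (a + v) mod M) {..<M :: nat}"
  by (rule inj_onI) (metis cong_def cong_add_lcancel_nat cong_less_modulus_unique_nat lessThan_iff)

lemma inj_on_double_mod: "odd M \<Longrightarrow> inj_on (\<lambda>v. (2 * v) mod M) {..<M :: nat}"
  by (rule inj_onI)
    (metis cong_def cong_mult_lcancel_nat coprime_left_2_iff_odd cong_less_modulus_unique_nat lessThan_iff)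

text \<open>For odd M this is the standard 1-factorisation of K_{M+1} on the vertices 0..M: at every
  vertex each label in {..<M} occurs exactly once.\<close>

definition factorization_label :: "nat \<Rightarrow> nat \<Rightarrow> nat \<Rightarrow> nat" where
  "factorization_label M u v = (if u = M then 2 * v else if v = M then 2 * u else u + v) mod M"

lemma factorization_label_commute: "factorization_label M u v = factorization_label M v u"
  unfolding factorization_label_def by (simp add: add.commute)

lemma inj_on_factorization_label:
  assumes M: "odd M" and u: "u \<le> M"
  shows "inj_on (factorization_label M u) {v. v \<le> M \<and> v \<noteq> u}"
proof (cases "u = M")
  case True
  have "factorization_label M u v = (2 * v) mod M" if "v \<noteq> M" for v
    using True that by (simp add: factorization_label_def)
  then have "inj_on (factorization_label M u) {..<M} = inj_on (\<lambda>v. (2 * v) mod M) {..<M}"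
    by (intro inj_on_cong) simp
  moreover have "{v. v \<le> M \<and> v \<noteq> u} = {..<M}"
    using True by auto
  ultimately show ?thesis
    using inj_on_double_mod[OF M] by simp
next
  case False
  define h where "h v = (if v = M then u else v)" for v
  define A where "A = {v. v \<le> M \<and> v \<noteq> u}"
  have "inj_on h A"
    unfolding A_def h_def inj_on_def by auto
  moreover have "h ` A \<subseteq> {..<M}"
    using False u unfolding A_def h_def by auto
  ultimately have "inj_on ((\<lambda>w. (u + w) mod M) \<circ> h) A"
    by (intro comp_inj_on inj_on_subset[OF inj_on_add_mod])
  moreover have "factorization_label M u = (\<lambda>w. (u + w) mod M) \<circ> h"
    using False by (simp add: fun_eq_iff factorization_label_def h_def mult_2)
  ultimately show ?thesis
    unfolding A_def by simp
qed

lemma exists_color_degrees_ge_even: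
  assumes N: "even N" and t: "0 < t" and k: "0 < k" and tk: "t * k \<le> N - 1"
  shows "\<exists>c. color_degrees_ge N t k c"
proof -
  define M where "M = N - 1"
  have "1 \<le> t * k"
    using t k by (metis One_nat_def Suc_leI mult_pos_pos)
  with tk have "2 \<le> N"
    by linarith
  with N have NM: "N = M + 1" and M: "odd M" and "0 < M"
    unfolding M_def by auto
  define c where "c e = block_color t k (factorization_label M (Min e) (Max e))" for e
  have c_pair: "c {u, v} = block_color t k (factorization_label M u v)" for u v
    unfolding c_def by (rule Min_Max_pair_commute) (simp add: factorization_label_commute)
  have deg: "color_degree N c u j = card {s \<in> {..<M}. block_color t k s = j}" if u: "u < N" for u j
  proof (rule color_degree_eq_if_labelling[OF u, where l = "factorization_label M u"])
    show "inj_on (factorization_label M u) {v. v < N \<and> v \<noteq> u}"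
      using inj_on_factorization_label[OF M, of u] u unfolding NM by (simp add: less_Suc_eq_le)
    show "factorization_label M u ` {v. v < N \<and> v \<noteq> u} \<subseteq> {..<M}"
      using \<open>0 < M\<close> by (auto simp: factorization_label_def)
  qed (auto simp: M_def c_pair)
  have "color_degrees_ge N t k c"
    unfolding color_degrees_ge_def
  proof (intro conjI allI impI)
    show "c ` complete_edges N \<subseteq> {..<t}"
      using block_color_less[OF t] by (auto simp: c_def)
    fix u j assume "u < N" "j < t"
    with card_block_color_ge[of j t k M] tk show "k \<le> color_degree N c u j"
      unfolding deg[OF \<open>u < N\<close>] M_def by simp
  qed
  then show ?thesis
    by blast
qed

lemma color_degrees_ge_extend:
  assumes rich: "color_degrees_ge N t k c" and t: "0 < t" and tk: "t * k \<le> N"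
  shows "\<exists>c'. color_degrees_ge (Suc N) t k c'"
proof -
  define c' where "c' e = (if N \<in> e then block_color t k (Min e) else c e)" for e
  have "color_degrees_ge (Suc N) t k c'"
    unfolding color_degrees_ge_def
  proof (intro conjI allI impI subsetI)
    fix a assume "a \<in> c' ` complete_edges (Suc N)"
    then obtain u v where a: "a = c' {u, v}" and uv: "u < Suc N" "v < Suc N" "u \<noteq> v"
      unfolding complete_edges_def by auto
    show "a \<in> {..<t}"
    proof (cases "N \<in> {u, v}")
      case True
      with a show ?thesis
        using block_color_less[OF t] by (simp add: c'_def)
    next
      case False
      with uv have "{u, v} \<in> complete_edges N"
        by (auto intro: complete_edgesI)
      with False a rich show ?thesis
        unfolding color_degrees_ge_def c'_def by auto
    qed
  next
    fix u j assume u: "u < Suc N" and j: "j < t"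
    show "k \<le> color_degree (Suc N) c' u j"
    proof (cases "u = N")
      case True
      have "{s. s < N \<and> block_color t k s = j} \<subseteq> {v. v < Suc N \<and> v \<noteq> u \<and> c' {u, v} = j}"
        using True by (auto simp: c'_def min_def)
      from card_mono[OF _ this] card_block_color_ge[OF j tk] show ?thesis
        unfolding color_degree_def by simp
    next
      case False
      with u have "{v. v < N \<and> v \<noteq> u \<and> c {u, v} = j} \<subseteq> {v. v < Suc N \<and> v \<noteq> u \<and> c' {u, v} = j}"
        by (auto simp: c'_def)
      from card_mono[OF _ this] have "color_degree N c u j \<le> color_degree (Suc N) c' u j"
        unfolding color_degree_def by simp
      moreover have "k \<le> color_degree N c u j"
        using rich u False j unfolding color_degrees_ge_def by simp
      ultimately show ?thesis
        by simp
    qed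
  qed
  then show ?thesis
    by blast
qed

lemma exists_color_degrees_ge_circulant:
  assumes "even k" and t: "0 < t" and tk: "t * k \<le> N - 1"
  shows "\<exists>c. color_degrees_ge N t k c"
proof -
  define h where "h = k div 2"
  have kh: "k = h + h"
    using \<open>even k\<close> unfolding h_def by presburger
  have th: "2 * (t * h) \<le> N - 1"
    using tk kh by (simp add: algebra_simps)
  \<comment> \<open>Colour by circular length; each length below N/2 occurs twice at every vertex.\<close>
  define F where "F d = block_color t h (min d (N - d) - 1)" for d
  define c where "c e = F (Max e - Min e)" for e
  define l where "l u v = (if u < v then v - u else N - (u - v))" for u v
  have F_sym: "F (N - d) = F d" if "d \<le> N" for d
    unfolding F_def using that by (simp add: min.commute)
  have c_pair: "c {u, v} = F (l u v)" if "u < N" "u \<noteq> v" for u v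
  proof (cases "u < v")
    case False
    then have "c {u, v} = F (u - v)"
      by (simp add: c_def min_def max_def)
    also have "\<dots> = F (N - (u - v))"
      using F_sym[of "u - v"] \<open>u < N\<close> by simp
    finally show ?thesis
      using False by (simp add: l_def)
  qed (simp add: c_def l_def min_def max_def)
  have deg: "color_degree N c u j = card {s \<in> {1..<N}. F s = j}" if u: "u < N" for u j
  proof (rule color_degree_eq_if_labelling[OF u, where l = "l u"])
    show "inj_on (l u) {v. v < N \<and> v \<noteq> u}"
      using u by (auto simp: inj_on_def l_def split: if_splits)
    show "l u ` {v. v < N \<and> v \<noteq> u} \<subseteq> {1..<N}"
      using u by (auto simp: l_def)
  qed (use u c_pair in auto)
  have count: "k \<le> card {s \<in> {1..<N}. F s = j}" if j: "j < t" for j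
  proof -
    define D where "D = {j * h + 1..j * h + h}"
    have "j * h + h \<le> t * h"
      using j by (metis Suc_leI add.commute mult_Suc mult_le_mono1)
    moreover have "(d - 1) div h = j" if "d \<in> D" for d
      using that by (intro div_nat_eqI) (auto simp: D_def algebra_simps)
    ultimately have D: "1 \<le> d" "2 * d \<le> N - 1" "F d = j" if "d \<in> D" for d
      using that th j by (auto simp: D_def F_def block_color_def)
    have "d' \<noteq> N - d" if "d' \<in> D" "d \<in> D" for d' d
      using D[OF that(1)] D[OF that(2)] by linarith
    then have "D \<inter> (\<lambda>d. N - d) ` D = {}"
      by blast
    moreover have "inj_on (\<lambda>d. N - d) D"
      using D by (intro inj_onI) fastforce
    ultimately have "card (D \<union> (\<lambda>d. N - d) ` D) = k"
      by (simp add: D_def card_Un_disjoint card_image kh)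
    moreover have "D \<union> (\<lambda>d. N - d) ` D \<subseteq> {s \<in> {1..<N}. F s = j}"
      using D F_sym by force
    ultimately show ?thesis
      using card_mono[of "{s \<in> {1..<N}. F s = j}"] by fastforce
  qed
  have "color_degrees_ge N t k c"
    using block_color_less[OF t] count unfolding color_degrees_ge_def
    by (auto simp: deg c_def F_def)
  then show ?thesis
    by blast
qed

lemma exists_color_degrees_ge:
  assumes t: "0 < t" and k: "0 < k" and tk: "t * k \<le> N - 1"
    and not_tight: "\<not> (odd N \<and> odd k \<and> t * k = N - 1)"
  shows "\<exists>c. color_degrees_ge N t k c"
proof (cases "even k")
  case True
  from True t tk show ?thesis
    by (rule exists_color_degrees_ge_circulant)
next
  case odd_k: False
  show ?thesis
  proof (cases "even N")
    case True
    from True t k tk show ?thesis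
      by (rule exists_color_degrees_ge_even)
  next
    case False
    with odd_k not_tight tk have "t * k \<le> (N - 1) - 1" and "even (N - 1)" and N: "N = Suc (N - 1)"
      by auto
    with t k obtain c where "color_degrees_ge (N - 1) t k c"
      using exists_color_degrees_ge_even by blast
    with t tk color_degrees_ge_extend show ?thesis
      by (metis N)
  qed
qed

section \<open>The threshold\<close>

definition forces_few_colored_star :: "nat \<Rightarrow> nat \<Rightarrow> nat \<Rightarrow> bool" where
  "forces_few_colored_star t n N \<longleftrightarrow>
     (\<forall>c. c ` complete_edges N \<subseteq> {..<t} \<longrightarrow>
       has_sub_few_colors (star_vertices n) (star_edges n) N c (t - 1))"

lemma forces_few_colored_star_iff:
  assumes t: "0 < t" and N: "0 < N"
  shows "forces_few_colored_star t n N \<longleftrightarrow>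
           N \<le> t * (N - n) \<or> (odd N \<and> odd (N - n) \<and> t * (N - n) + 1 = N)"
proof (cases "n < N")
  case False
  have "(\<lambda>_. 0) ` complete_edges N \<subseteq> {..<t}"
    using t by auto
  moreover have "\<not> has_sub_few_colors (star_vertices n) (star_edges n) N (\<lambda>_. 0) (t - 1)"
    using False by (simp add: no_star_in_small_complete_graph)
  ultimately show ?thesis
    using False N unfolding forces_few_colored_star_def by auto
next
  case True
  define k where "k = N - n"
  have nk: "n + k = N" and k: "0 < k"
    using True unfolding k_def by auto
  consider (large) "N \<le> t * k" | (tight) "odd N" "odd k" "t * k + 1 = N"
    | (small) "t * k \<le> N - 1" "\<not> (odd N \<and> odd k \<and> t * k = N - 1)"
    using N by linarith
  then show ?thesis
  proof cases
    case large
    then show ?thesis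
      using True few_colored_star_if_le_mult unfolding forces_few_colored_star_def k_def by blast
  next
    case tight
    then show ?thesis
      using t nk few_colored_star_if_tight_odd[of _ N t k n]
      unfolding forces_few_colored_star_def k_def by auto
  next
    case small
    then obtain c where c: "color_degrees_ge N t k c"
      using t k exists_color_degrees_ge by blast
    then have "\<not> has_sub_few_colors (star_vertices n) (star_edges n) N c (t - 1)"
      using t nk by (intro no_few_colored_star_if_color_degrees_ge) auto
    with c small N show ?thesis
      unfolding forces_few_colored_star_def color_degrees_ge_def k_def by auto
  qed
qed

lemma le_mult_diff_iff_div_less:
  fixes t n N :: nat
  assumes t: "2 \<le> t" and n: "1 \<le> n" and N: "0 < N"
  shows "N \<le> t * (N - n) \<longleftrightarrow> (n * t - 1) div (t - 1) < N"
proof -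
  define T where "T = t - 1"
  have t_eq: "t = T + 1" and T: "0 < T"
    using t unfolding T_def by auto
  have "N \<le> (T + 1) * (N - n) \<longleftrightarrow> n * (T + 1) - 1 < N * T"
  proof (cases "n < N")
    case True
    then obtain k where "N = n + k"
      using less_imp_add_positive by blast
    with n show ?thesis
      by (simp add: algebra_simps) linarith
  next
    case False
    with N have "\<not> N \<le> (T + 1) * (N - n)"
      by simp
    moreover have "N * T \<le> n * T" and "n * (T + 1) = n * T + n"
      using False by simp_all
    with n have "\<not> n * (T + 1) - 1 < N * T"
      by linarith
    ultimately show ?thesis
      by blast
  qed
  also have "\<dots> \<longleftrightarrow> (n * (T + 1) - 1) div T < N"
    using T by (simp add: div_less_iff_less_mult)
  finally show ?thesis
    by (simp add: t_eq)
qed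

lemma tight_iff_div_eq:
  fixes t n N x q :: nat
  assumes t: "2 \<le> t" and n: "1 \<le> n"
    and x: "x = (n * t - 1) div (t - 1)" and q: "q = x div t"
  shows "n < N \<and> t * (N - n) + 1 = N \<longleftrightarrow> N = x \<and> x = t * q + 1 \<and> 0 < q"
proof -
  define T where "T = t - 1"
  have t_eq: "t = T + 1" and T: "0 < T"
    using t unfolding T_def by auto
  show ?thesis
  proof
    assume "n < N \<and> t * (N - n) + 1 = N"
    moreover define k where "k = N - n"
    ultimately have N: "N = n + k" "0 < k" and tk: "t * k + 1 = N"
      by auto
    then have "n * t - 1 = N * T"
      unfolding t_eq by (simp add: algebra_simps)
    with T have "x = N"
      by (simp add: x T_def)
    moreover have "q = k"
      unfolding q \<open>x = N\<close> tk[symmetric] using t by (intro div_nat_eqI) auto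
    ultimately show "N = x \<and> x = t * q + 1 \<and> 0 < q"
      using tk N by simp
  next
    assume "N = x \<and> x = t * q + 1 \<and> 0 < q"
    then have N: "N = x" and xq: "x = t * q + 1" and "0 < q"
      by auto
    have "x * T + (n * t - 1) mod T = n * t - 1"
      unfolding x T_def by (rule div_mult_mod_eq)
    moreover have "(n * t - 1) mod T < T"
      using T by simp
    moreover have "1 \<le> n * t"
      using n t by simp
    ultimately have "x * T < n * t" and "n * t \<le> x * T + T"
      by linarith+
    moreover have "t * (T * q + 1) = x * T + 1" and "t * (T * q + 2) = x * T + T + 2"
      unfolding xq t_eq by (simp_all add: algebra_simps)
    ultimately have "t * (T * q + 1) \<le> t * n" and "t * n < t * (T * q + 2)"
      by (simp_all add: mult.commute)
    then have "n = T * q + 1"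
      unfolding mult_le_cancel1 mult_less_cancel1 by linarith
    with N xq \<open>0 < q\<close> show "n < N \<and> t * (N - n) + 1 = N"
      unfolding t_eq by (simp add: algebra_simps)
  qed
qed

lemma odd_tight_iff_div_eq:
  fixes t n N x q :: nat
  assumes t: "2 \<le> t" and "1 \<le> n"
    and "x = (n * t - 1) div (t - 1)" and "q = x div t"
  shows "odd N \<and> odd (N - n) \<and> t * (N - n) + 1 = N \<longleftrightarrow> N = x \<and> x = t * q + 1 \<and> odd x \<and> odd q"
proof -
  have diff_eq: "N - n = q" if "t * (N - n) + 1 = N" and "N = t * q + 1"
    using that t by simp
  show ?thesis
  proof
    assume H: "odd N \<and> odd (N - n) \<and> t * (N - n) + 1 = N"
    then have "n < N"
      by (cases "n < N") auto
    with H tight_iff_div_eq[OF assms] have "N = x" and "x = t * q + 1"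
      by blast+
    with H diff_eq show "N = x \<and> x = t * q + 1 \<and> odd x \<and> odd q"
      by metis
  next
    assume H: "N = x \<and> x = t * q + 1 \<and> odd x \<and> odd q"
    with tight_iff_div_eq[OF assms] odd_pos have "t * (N - n) + 1 = N"
      by blast
    with H diff_eq show "odd N \<and> odd (N - n) \<and> t * (N - n) + 1 = N"
      by metis
  qed
qed

theorem theorem3:
  fixes t n x q :: nat
  assumes "t \<ge> 2" and "n \<ge> 1"
    and "x = (n * t - 1) div (t - 1)" and "q = x div t"
  shows "ramsey_st (t - 1) t (star_vertices n) (star_edges n) =
           (if x = t * q + 1 \<and> odd x \<and> odd q then x else x + 1)"
proof -
  let ?exceptional = "x = t * q + 1 \<and> odd x \<and> odd q"
  have least_iff: "0 < N \<and> forces_few_colored_star t n N \<longleftrightarrow> x < N \<or> (N = x \<and> ?exceptional)" for N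
  proof (cases "0 < N")
    case True
    with assms(1) have "forces_few_colored_star t n N \<longleftrightarrow>
        N \<le> t * (N - n) \<or> (odd N \<and> odd (N - n) \<and> t * (N - n) + 1 = N)"
      by (intro forces_few_colored_star_iff) auto
    with True show ?thesis
      unfolding le_mult_diff_iff_div_less[OF assms(1,2) True] odd_tight_iff_div_eq[OF assms]
        assms(3)[symmetric] by blast
  qed auto
  have "ramsey_st (t - 1) t (star_vertices n) (star_edges n) =
          (LEAST N. 0 < N \<and> forces_few_colored_star t n N)"
    unfolding ramsey_st_def forces_few_colored_star_def ..
  also have "\<dots> = (if ?exceptional then x else x + 1)"
    by (rule Least_equality) (auto simp: least_iff)
  finally show ?thesis .
qed

end
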